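(* Let $\mathcal{G}_n$ be the set of binary words of length $2n$ with $n$ zeros and $n$ ones. For integers $k,\ell\ge0$, the number of words in $\mathcal{G}_n$ with exactly $k$ occurrences of $001$ (as consecutive subword) equals $$\binom{n}{2k}\binom{2k}{k}2^{n-2k},$$ and the number of words in $\mathcal{G}_n$ with exactly $k$ occurrences of $001$ and exactly $\ell$ occurrences of $01$ (as consecutive subwords) equals $$\binom{n}{2k}\binom{2k}{k}\binom{n-2k}{\ell-k},$$ which, when $k\le\ell\le n-k$, equals $\dfrac{n!}{k!^2(\ell-k)!(n-k-\ell)!}$.
   Context: Binomial coefficients $\binom{a}{b}$ are $0$ when $b<0$ or $b>a$. *)

theory Defs
  imports Complex_Main
begin

definition G :: "nat \<Rightarrow> nat list set" where
  "G n = {w. length w = 2 * n \<and> set w \<subseteq> {0, 1} \<and> count_list w 0 = n \<and> count_list w 1 = n}"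

definition occ :: "nat list \<Rightarrow> nat list \<Rightarrow> nat" where
  "occ p w = card {i. i + length p \<le> length w \<and> take (length p) (drop i w) = p}"

definition binom :: "int \<Rightarrow> int \<Rightarrow> nat" where
  "binom a b = (if b < 0 \<or> b > a then 0 else nat a choose nat b)"

end

theory Submission
  imports Defs
begin

text \<open>
  A word with \<open>a\<close> zeros and \<open>b\<close> ones is determined by the lengths \<open>x\<^sub>1, \<dots>, x\<^sub>b\<close> of
  the runs of zeros in front of its ones (the remaining zeros form a trailing run). Occurrences
  of \<open>01\<close> are the runs with \<open>x\<^sub>i \<ge> 1\<close>, occurrences of \<open>001\<close> those with \<open>x\<^sub>i \<ge> 2\<close>. Choosing the
  \<open>l\<close> nonempty runs, the \<open>k\<close> long ones among them, and distributing the \<open>a - l - k\<close> spare zeros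
  over the long runs and the trailing run gives \<open>C(b,l) C(l,k) C(a-l,k)\<close> words; this count is
  established by induction on \<open>b\<close>, splitting off the first block \<open>0\<^sup>x1\<close>. For \<open>a = b = n\<close>
  both this product and \<open>C(n,2k) C(2k,k) C(n-2k,l-k)\<close> equal the multinomial coefficient
  \<open>n! / (k!\<^sup>2 (l-k)! (n-k-l)!)\<close>, and summing the latter over \<open>l\<close> gives \<open>C(n,2k) C(2k,k) 2^(n-2k)\<close>.
\<close>

lemma occ_Cons:
  assumes "p \<noteq> []"
  shows "occ p (c # w) = occ p w + of_bool (take (length p) (c # w) = p)"
proof -
  let ?S = "{i. i + length p \<le> length w \<and> take (length p) (drop i w) = p}"
  have "{i. i + length p \<le> length (c # w) \<and> take (length p) (drop i (c # w)) = p}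
      = (if take (length p) (c # w) = p then {0} else {}) \<union> Suc ` ?S"
  proof (rule set_eqI)
    fix i show "i \<in> {i. i + length p \<le> length (c # w) \<and> take (length p) (drop i (c # w)) = p}
        \<longleftrightarrow> i \<in> (if take (length p) (c # w) = p then {0} else {}) \<union> Suc ` ?S"
      by (cases i) (auto dest: arg_cong[of _ _ length])
  qed
  moreover have "finite ?S"
    by (rule finite_subset[of _ "{..length w}"]) auto
  ultimately show ?thesis
    unfolding occ_def by (simp add: card_image)
qed

lemma occ_eq_0_if_not_subset:
  assumes "\<not> set p \<subseteq> set w"
  shows "occ p w = 0"
proof -
  have "set p \<subseteq> set w" if "take (length p) (drop i w) = p" for i
    using that by (metis set_drop_subset set_take_subset subset_trans)
  with assms have no_occurrence:
    "{i. i + length p \<le> length w \<and> take (length p) (drop i w) = p} = {}"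
    by blast
  show ?thesis
    unfolding occ_def no_occurrence by simp
qed

lemma occ_le_length: "p \<noteq> [] \<Longrightarrow> occ p w \<le> length w"
  unfolding occ_def
  by (rule card_mono[of "{..<length w}", simplified]) (auto simp: Suc_le_eq neq_Nil_conv)

lemma take_zeros_one_eq_iff:
  "take (Suc m) (replicate x 0 @ 1 # v) = replicate m (0::nat) @ [1] \<longleftrightarrow> x = m"
proof (induction x arbitrary: m)
  case 0
  then show ?case by (cases m) auto
next
  case (Suc x)
  then show ?case by (cases m) auto
qed

lemma occ_zeros_one_prepend_block:
  "occ (replicate m 0 @ [1]) (replicate x 0 @ 1 # v)
     = occ (replicate m 0 @ [1]) v + of_bool (m \<le> x)"
proof (induction x)
  case 0
  show ?case
    using occ_Cons[of "replicate m 0 @ [1]" 1 v] by (cases m) auto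
next
  case (Suc x)
  show ?case
    using occ_Cons[of "replicate m 0 @ [1]" 0 "replicate x 0 @ 1 # v"] Suc
      take_zeros_one_eq_iff[of m "Suc x" v]
    by auto
qed

definition words :: "nat \<Rightarrow> nat \<Rightarrow> nat list set" where
  "words a b = {w. length w = a + b \<and> set w \<subseteq> {0, 1} \<and> count_list w 0 = a \<and> count_list w 1 = b}"

lemma G_eq_words: "G n = words n n"
  unfolding G_def words_def by (auto simp: mult_2)

lemma finite_words: "finite (words a b)"
  by (rule finite_subset[OF _ finite_lists_length_eq[of "{0, 1}" "a + b"]]) (auto simp: words_def)

lemma count_list_replicate_same [simp]: "count_list (replicate n x) x = n"
  by (induction n) auto

lemma words_0: "words a 0 = {replicate a 0}"
proof -
  have "w = replicate a 0" if "w \<in> words a 0" for w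
  proof -
    from that have "length w = a" "set w \<subseteq> {0}"
      by (auto simp: words_def count_list_0_iff)
    then show ?thesis
      by (auto intro: replicate_eqI)
  qed
  then show ?thesis
    by (auto simp: words_def)
qed

lemma words_Suc:
  "words a (Suc b) = (\<lambda>(x, v). replicate x 0 @ 1 # v) ` (SIGMA x:{..a}. words (a - x) b)"
proof (intro equalityI subsetI)
  fix w assume w: "w \<in> words a (Suc b)"
  then have "count_list w 1 \<noteq> 0"
    by (simp add: words_def)
  then have "1 \<in> set w"
    by (metis count_notin)
  then obtain u v where w_split: "w = u @ 1 # v" and "1 \<notin> set u"
    by (blast dest: split_list_first)
  moreover from this w have "set u \<subseteq> {0}"
    by (auto simp: words_def)
  ultimately have "w = replicate (length u) 0 @ 1 # v"
    by (auto intro: replicate_eqI)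
  moreover from this w have "length u \<le> a" "v \<in> words (a - length u) b"
    by (auto simp: words_def)
  ultimately show "w \<in> (\<lambda>(x, v). replicate x 0 @ 1 # v) ` (SIGMA x:{..a}. words (a - x) b)"
    by auto
qed (auto simp: words_def)

lemma zeros_one_Cons_eq_iff:
  "replicate x (0::nat) @ 1 # v = replicate y 0 @ 1 # u \<longleftrightarrow> x = y \<and> v = u"
proof (induction x arbitrary: y)
  case 0
  then show ?case by (cases y) auto
next
  case (Suc x)
  then show ?case by (cases y) auto
qed

lemma card_words_Suc_filter:
  "card {w \<in> words a (Suc b). P w}
     = (\<Sum>x\<le>a. card {v \<in> words (a - x) b. P (replicate x 0 @ 1 # v)})"
proof -
  let ?f = "\<lambda>(x, v). replicate x 0 @ 1 # v"
  let ?A = "SIGMA x:{..a}. {v \<in> words (a - x) b. P (replicate x 0 @ 1 # v)}"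
  have "{w \<in> words a (Suc b). P w} = ?f ` ?A"
    unfolding words_Suc by auto
  moreover have "inj_on ?f ?A"
    by (rule inj_onI) (clarsimp simp: zeros_one_Cons_eq_iff simp del: One_nat_def)
  ultimately have "card {w \<in> words a (Suc b). P w} = card ?A"
    by (simp add: card_image)
  also have "\<dots> = (\<Sum>x\<le>a. card {v \<in> words (a - x) b. P (replicate x 0 @ 1 # v)})"
    by (simp add: finite_words)
  finally show ?thesis .
qed

definition occ_count :: "nat \<Rightarrow> nat \<Rightarrow> nat \<Rightarrow> nat \<Rightarrow> nat" where
  "occ_count a b k l = (if l \<le> a then (b choose l) * (l choose k) * ((a - l) choose k) else 0)"

lemma sum_occ_count_upto:
  "(\<Sum>y<N. occ_count y b k l) = (b choose l) * (l choose k) * ((N - l) choose Suc k)"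
proof (induction N)
  case 0
  then show ?case by simp
next
  case (Suc N)
  then show ?case
    by (cases "l \<le> N") (auto simp: occ_count_def Suc_diff_le algebra_simps)
qed

lemma occ_count_Suc:
  "occ_count a (Suc b) k l =
     (\<Sum>x\<le>a. if of_bool (2 \<le> x) \<le> k \<and> of_bool (1 \<le> x) \<le> l
            then occ_count (a - x) b (k - of_bool (2 \<le> x)) (l - of_bool (1 \<le> x)) else 0)"
  (is "_ = (\<Sum>x\<le>a. ?T x)")
proof (cases a)
  case 0
  then show ?thesis by (simp add: occ_count_def)
next
  case (Suc a')
  have "(\<Sum>x\<le>Suc a'. f x) = f 0 + f 1 + (\<Sum>i<a'. f (Suc (Suc i)))" for f :: "nat \<Rightarrow> nat"
    by (simp only: lessThan_Suc_atMost[symmetric] sum.lessThan_Suc_shift One_nat_def add.assoc)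
  then have split: "(\<Sum>x\<le>a. ?T x) = ?T 0 + ?T 1 + (\<Sum>i<a'. ?T (Suc (Suc i)))"
    unfolding Suc .
  show ?thesis
  proof (cases l)
    case 0
    then show ?thesis unfolding split by (simp add: occ_count_def)
  next
    case l: (Suc m)
    show ?thesis
    proof (cases k)
      case 0
      then show ?thesis unfolding split using l Suc by (simp add: occ_count_def)
    next
      case k: (Suc j)
      have "(\<Sum>i<a'. ?T (Suc (Suc i))) = (\<Sum>i<a'. occ_count (a' - Suc i) b j m)"
        using l k Suc by simp
      also have "\<dots> = (\<Sum>i<a'. occ_count i b j m)"
        by (rule sum.nat_diff_reindex)
      also have "\<dots> = (b choose m) * (m choose j) * ((a' - m) choose Suc j)"
        by (rule sum_occ_count_upto)
      finally show ?thesis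
        unfolding split using l k Suc by (cases "m \<le> a'") (simp_all add: occ_count_def algebra_simps)
    qed
  qed
qed

lemma card_filter_add_eq:
  fixes f g :: "'a \<Rightarrow> nat"
  shows "card {v \<in> S. f v + c = k \<and> g v + d = l}
     = (if c \<le> k \<and> d \<le> l then card {v \<in> S. f v = k - c \<and> g v = l - d} else (0::nat))"
proof -
  have "{v \<in> S. f v + c = k \<and> g v + d = l}
      = (if c \<le> k \<and> d \<le> l then {v \<in> S. f v = k - c \<and> g v = l - d} else {})"
    by auto
  then show ?thesis by simp
qed

lemma card_words_occ:
  "card {w \<in> words a b. occ [0, 0, 1] w = k \<and> occ [0, 1] w = l} = occ_count a b k l"
proof (induction b arbitrary: a k l)
  case 0
  have "occ [0, 0, 1] (replicate a 0) = 0" "occ [0, 1] (replicate a 0) = 0"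
    by (simp_all add: occ_eq_0_if_not_subset)
  then have "{w \<in> words a 0. occ [0, 0, 1] w = k \<and> occ [0, 1] w = l}
      = (if k = 0 \<and> l = 0 then {replicate a 0} else {})"
    by (auto simp: words_0)
  then show ?case
    by (auto simp: occ_count_def)
next
  case (Suc b)
  have block: "occ [0, 0, 1] (replicate x 0 @ 1 # v) = occ [0, 0, 1] v + of_bool (2 \<le> x)"
    "occ [0, 1] (replicate x 0 @ 1 # v) = occ [0, 1] v + of_bool (1 \<le> x)" for x v
    using occ_zeros_one_prepend_block[of 2 x v] occ_zeros_one_prepend_block[of 1 x v]
    by (simp_all add: numeral_2_eq_2)
  show ?case
    unfolding card_words_Suc_filter block card_filter_add_eq Suc.IH occ_count_Suc ..
qed

lemma choose_choose_choose_fact: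
  assumes "k \<le> l" "l + k \<le> n"
  shows "real ((n choose l) * (l choose k) * ((n - l) choose k))
           = fact n / (fact k ^ 2 * fact (l - k) * fact (n - k - l))"
proof -
  have "n - l - k = n - k - l" by simp
  with assms show ?thesis
    by (simp add: binomial_fact field_simps power2_eq_square)
qed

lemma choose_central_choose_fact:
  assumes "k \<le> l" "l + k \<le> n"
  shows "real ((n choose (2 * k)) * ((2 * k) choose k) * ((n - 2 * k) choose (l - k)))
           = fact n / (fact k ^ 2 * fact (l - k) * fact (n - k - l))"
proof -
  have "n - 2 * k - (l - k) = n - k - l" "2 * k - k = k"
    using assms by simp_all
  with assms show ?thesis
    by (simp add: binomial_fact field_simps power2_eq_square)
qed

lemma occ_count_diagonal:
  "occ_count n n k l
     = (n choose (2 * k)) * ((2 * k) choose k) * (if k \<le> l then (n - 2 * k) choose (l - k) else 0)"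
proof (cases "k \<le> l \<and> l + k \<le> n")
  case True
  then show ?thesis
    using choose_choose_choose_fact[of k l n] choose_central_choose_fact[of k l n]
    by (simp add: occ_count_def del: of_nat_mult)
next
  case False
  then show ?thesis
    by (cases "2 * k \<le> n") (auto simp: occ_count_def not_le binomial_eq_0)
qed

lemma sum_shifted_choose_row:
  assumes "N + k \<le> M"
  shows "(\<Sum>l\<le>M. if k \<le> l then N choose (l - k) else 0) = 2 ^ N"
proof -
  have "(\<Sum>l\<le>M. if k \<le> l then N choose (l - k) else 0) = (\<Sum>l = k..M. N choose (l - k))"
    by (rule sum.mono_neutral_cong_right) auto
  also have "\<dots> = (\<Sum>i = 0..M - k. N choose i)"
    using sum.shift_bounds_cl_nat_ivl[of "\<lambda>l. N choose (l - k)" 0 k "M - k"] assms by simp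
  also have "\<dots> = (\<Sum>i\<le>N. N choose i)"
    by (rule sum.mono_neutral_right) (use assms in auto)
  also have "\<dots> = 2 ^ N"
    by (rule choose_row_sum)
  finally show ?thesis .
qed

lemma card_G_occ_001_01:
  "card {w \<in> G n. occ [0, 0, 1] w = k \<and> occ [0, 1] w = l} = occ_count n n k l"
  unfolding G_eq_words by (rule card_words_occ)

lemma card_G_occ_001:
  "card {w \<in> G n. occ [0, 0, 1] w = k} = (n choose (2 * k)) * ((2 * k) choose k) * 2 ^ (n - 2 * k)"
proof -
  let ?S = "{w \<in> G n. occ [0, 0, 1] w = k}"
  have "occ [0, 1] w \<le> 2 * n" if "w \<in> G n" for w
    using that occ_le_length[of "[0, 1]" w] by (simp add: G_def)
  then have occ_01_range: "occ [0, 1] ` ?S \<subseteq> {..2 * n}"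
    by auto
  have "finite ?S"
    by (simp add: G_eq_words finite_words)
  then have "card ?S = (\<Sum>l\<le>2 * n. card {w \<in> ?S. occ [0, 1] w = l})"
    unfolding card_eq_sum by (rule sum.group[symmetric, OF _ finite_atMost occ_01_range])
  also have "\<dots> = (\<Sum>l\<le>2 * n. occ_count n n k l)"
    by (simp only: mem_Collect_eq conj_assoc card_G_occ_001_01)
  also have "\<dots> = (n choose (2 * k)) * ((2 * k) choose k)
                    * (\<Sum>l\<le>2 * n. if k \<le> l then (n - 2 * k) choose (l - k) else 0)"
    by (simp add: occ_count_diagonal sum_distrib_left)
  also have "\<dots> = (n choose (2 * k)) * ((2 * k) choose k) * 2 ^ (n - 2 * k)"
    by (cases "2 * k \<le> n") (simp_all add: sum_shifted_choose_row)
  finally show ?thesis .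
qed

lemma binom_int_int: "binom (int a) (int b) = a choose b"
  by (simp add: binom_def binomial_eq_0)

lemma binom_diff:
  "binom (int a - int b) (int c - int d) = (if b \<le> a \<and> d \<le> c then (a - b) choose (c - d) else 0)"
  by (auto simp: binom_def of_nat_diff[symmetric] simp del: of_nat_diff)

theorem corollary3p5:
  fixes n k l :: nat
  shows "card {w \<in> G n. occ [0,0,1] w = k}
           = binom (int n) (2 * int k) * binom (2 * int k) (int k) * 2 ^ (n - 2 * k)
       \<and> card {w \<in> G n. occ [0,0,1] w = k \<and> occ [0,1] w = l}
           = binom (int n) (2 * int k) * binom (2 * int k) (int k)
             * binom (int n - 2 * int k) (int l - int k)
       \<and> (k \<le> l \<and> l \<le> n - k \<longrightarrow>
         real (binom (int n) (2 * int k) * binom (2 * int k) (int k)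
               * binom (int n - 2 * int k) (int l - int k))
           = fact n / (fact k ^ 2 * fact (l - k) * fact (n - k - l)))"
proof -
  have central:
    "binom (int n) (2 * int k) * binom (2 * int k) (int k) = (n choose (2 * k)) * ((2 * k) choose k)"
    using binom_int_int[of n "2 * k"] binom_int_int[of "2 * k" k] by simp
  have product:
    "binom (int n) (2 * int k) * binom (2 * int k) (int k) * binom (int n - 2 * int k) (int l - int k)
       = occ_count n n k l"
    using binom_diff[of n "2 * k" l k]
    by (cases "2 * k \<le> n") (simp_all add: central occ_count_diagonal binomial_eq_0)
  have "real (occ_count n n k l) = fact n / (fact k ^ 2 * fact (l - k) * fact (n - k - l))"
    if "k \<le> l \<and> l \<le> n - k"
  proof -
    from that have "k \<le> l" "l + k \<le> n"
      by linarith+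
    then show ?thesis
      using choose_choose_choose_fact[of k l n] by (simp add: occ_count_def)
  qed
  then show ?thesis
    unfolding card_G_occ_001 card_G_occ_001_01 product unfolding central by simp
qed

end
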